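(* Let $X$ be a nonempty set, let $w$ be a convex metric modular on $X$, let $x_0\in X$ and let $X_w^*=\{x\in X:\exists\,\lambda>0,\ w_\lambda(x,x_0)<\infty\}$. Let $T\colon X_w^*\to X_w^*$ be a map and let $k\in(0,1)$, $\lambda_0>0$ be such that $w_{k\lambda}(Tx,Ty)\le w_\lambda(x,y)$ for all $0<\lambda\le\lambda_0$ and all $x,y\in X_w^*$. Let $0<\lambda<\lambda_0$ and let $\lambda_1,\lambda_2>0$ with $\lambda_1+\lambda_2=(1-k)\lambda$. Then $$w_\lambda(x,y)\le \frac{\lambda_1 w_{\lambda_1}(x,Tx)+\lambda_2 w_{\lambda_2}(y,Ty)}{\lambda(1-k)}$$ for every $x,y\in X_w^*$ such that $w_\lambda(x,y)<\infty$.
   Context: A metric modular on a nonempty set $X$ is a function $w\colon(0,\infty)\times X\times X\to[0,\infty]$, written $(\lambda,x,y)\mapsto w_\lambda(x,y)$, such that for all $x,y,z\in X$: (1) $w_\lambda(x,y)=0$ for all $\lambda>0$ if and only if $x=y$; (2) $w_\lambda(x,y)=w_\lambda(y,x)$ for all $\lambda>0$; (3) $w_{\lambda+\mu}(x,y)\le w_\lambda(x,z)+w_\mu(y,z)$ for all $\lambda,\mu>0$. The modular $w$ is convex if it satisfies $w_{\lambda+\mu}(x,y)\le \frac{\lambda}{\lambda+\mu}w_\lambda(x,z)+\frac{\mu}{\lambda+\mu}w_\mu(z,y)$ for all $\lambda,\mu>0$ and all $x,y,z\in X$. Arithmetic is in $[0,\infty]$. *)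

theory Defs
  imports "HOL-Library.Extended_Nonnegative_Real"
begin

text \<open>A metric modular on the (nonempty) type 'a, with values in [0,\<infinity>] (ennreal).
  Only the values at lam > 0 are relevant.\<close>
definition metric_modular :: "(real \<Rightarrow> 'a \<Rightarrow> 'a \<Rightarrow> ennreal) \<Rightarrow> bool" where
  "metric_modular w \<longleftrightarrow>
     (\<forall>x y. (\<forall>lam>0. w lam x y = 0) \<longleftrightarrow> x = y) \<and>
     (\<forall>lam>0. \<forall>x y. w lam x y = w lam y x) \<and>
     (\<forall>lam>0. \<forall>mu>0. \<forall>x y z. w (lam + mu) x y \<le> w lam x z + w mu y z)"

definition convex_modular :: "(real \<Rightarrow> 'a \<Rightarrow> 'a \<Rightarrow> ennreal) \<Rightarrow> bool" where
  "convex_modular w \<longleftrightarrow>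
     (\<forall>lam>0. \<forall>mu>0. \<forall>x y z.
        w (lam + mu) x y \<le> ennreal (lam / (lam + mu)) * w lam x z + ennreal (mu / (lam + mu)) * w mu z y)"

definition modular_space_star :: "(real \<Rightarrow> 'a \<Rightarrow> 'a \<Rightarrow> ennreal) \<Rightarrow> 'a \<Rightarrow> 'a set" where
  "modular_space_star w x0 = {x. \<exists>lam>0. w lam x x0 < \<infinity>}"

end

theory Submission
  imports Defs
begin

text \<open>Split \<open>\<lambda>\<close> as \<open>\<lambda>\<^sub>1 + k\<lambda> + \<lambda>\<^sub>2\<close> and apply convexity along the path
  \<open>x, Tx, Ty, y\<close>. After multiplying by \<open>\<lambda>\<close> this bounds \<open>\<lambda> w\<^sub>\<lambda>(x,y)\<close> by
  \<open>\<lambda>\<^sub>1 w\<^sub>\<lambda>\<^sub>1(x,Tx) + k\<lambda> w\<^sub>k\<^sub>\<lambda>(Tx,Ty) + \<lambda>\<^sub>2 w\<^sub>\<lambda>\<^sub>2(y,Ty)\<close>, and the contraction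
  property bounds the middle term by \<open>k\<lambda> w\<^sub>\<lambda>(x,y)\<close>. Since \<open>w\<^sub>\<lambda>(x,y)\<close> is finite,
  this term can be absorbed into the left-hand side. The contraction is applied to \<open>x, y\<close>
  only.\<close>

lemma metric_modular_sym:
  assumes "metric_modular w" and "0 < lam"
  shows "w lam x y = w lam y x"
  using assms unfolding metric_modular_def by blast

lemma convex_modular_weighted_triangle:
  assumes "convex_modular w" and "0 < a" and "0 < b"
  shows "ennreal (a + b) * w (a + b) x y \<le> ennreal a * w a x z + ennreal b * w b z y"
proof -
  have "w (a + b) x y \<le> ennreal (a / (a + b)) * w a x z + ennreal (b / (a + b)) * w b z y"
    using assms unfolding convex_modular_def by blast
  then have "ennreal (a + b) * w (a + b) x y
      \<le> ennreal (a + b) * (ennreal (a / (a + b)) * w a x z + ennreal (b / (a + b)) * w b z y)"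
    by (rule mult_left_mono) simp
  also have "\<dots> = ennreal a * w a x z + ennreal b * w b z y"
  proof -
    have "ennreal (a + b) * ennreal (a / (a + b)) = ennreal a"
         "ennreal (a + b) * ennreal (b / (a + b)) = ennreal b"
      using assms by (simp_all add: ennreal_mult[symmetric] del: ennreal_plus)
    then show ?thesis by (simp add: distrib_left mult.assoc[symmetric])
  qed
  finally show ?thesis .
qed

lemma convex_modular_weighted_path:
  assumes "convex_modular w" and "0 < a" and "0 < b" and "0 < c"
  shows "ennreal (a + b + c) * w (a + b + c) x y
           \<le> ennreal a * w a x u + ennreal b * w b u v + ennreal c * w c v y"
proof -
  have "ennreal (a + (b + c)) * w (a + (b + c)) x y
          \<le> ennreal a * w a x u + ennreal (b + c) * w (b + c) u y"
    using assms by (intro convex_modular_weighted_triangle) auto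
  also have "\<dots> \<le> ennreal a * w a x u + (ennreal b * w b u v + ennreal c * w c v y)"
    using assms by (intro add_left_mono convex_modular_weighted_triangle)
  finally show ?thesis by (simp add: add.assoc)
qed

lemma ennreal_absorb_le_divide:
  fixes W S :: ennreal and l c :: real
  assumes "W < \<infinity>" and "0 \<le> c" and "c < l"
    and "ennreal l * W \<le> S + ennreal c * W"
  shows "W \<le> S / ennreal (l - c)"
proof (cases "S = \<infinity>")
  case True
  then show ?thesis using \<open>c < l\<close> by (simp add: ennreal_top_divide)
next
  case False
  obtain r where r: "W = ennreal r" "0 \<le> r"
    using \<open>W < \<infinity>\<close> by (cases W) auto
  obtain s where s: "S = ennreal s" "0 \<le> s"
    using False by (cases S) auto
  have "ennreal (l * r) \<le> ennreal (s + c * r)"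
    using assms(4) r s \<open>0 \<le> c\<close> \<open>c < l\<close> by (simp add: ennreal_mult ennreal_plus)
  then have "l * r \<le> s + c * r"
    using r s \<open>0 \<le> c\<close> by (subst (asm) ennreal_le_iff) auto
  then have "r \<le> s / (l - c)"
    using \<open>c < l\<close> by (simp add: le_divide_eq algebra_simps)
  then have "ennreal r \<le> ennreal (s / (l - c))"
    by (rule ennreal_leI)
  also have "\<dots> = S / ennreal (l - c)"
    using s \<open>c < l\<close> by (simp add: divide_ennreal)
  finally show ?thesis using r by simp
qed

theorem proposition4p3:
  fixes w :: "real \<Rightarrow> 'a \<Rightarrow> 'a \<Rightarrow> ennreal" and x0 :: 'a and T :: "'a \<Rightarrow> 'a"
    and k lam0 lam lam1 lam2 :: real
  assumes "metric_modular w" and "convex_modular w"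
    and "\<forall>x\<in>modular_space_star w x0. T x \<in> modular_space_star w x0"
    and "0 < k" and "k < 1" and "0 < lam0"
    and "\<forall>mu. 0 < mu \<and> mu \<le> lam0 \<longrightarrow>
           (\<forall>x\<in>modular_space_star w x0. \<forall>y\<in>modular_space_star w x0.
              w (k * mu) (T x) (T y) \<le> w mu x y)"
    and "0 < lam" and "lam < lam0" and "0 < lam1" and "0 < lam2"
    and "lam1 + lam2 = (1 - k) * lam"
  shows "\<forall>x\<in>modular_space_star w x0. \<forall>y\<in>modular_space_star w x0.
           w lam x y < \<infinity> \<longrightarrow>
           w lam x y \<le> (ennreal lam1 * w lam1 x (T x) + ennreal lam2 * w lam2 y (T y))
                         / ennreal (lam * (1 - k))"
proof (intro ballI impI)
  fix x y
  assume x: "x \<in> modular_space_star w x0" and y: "y \<in> modular_space_star w x0"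
    and finite: "w lam x y < \<infinity>"
  let ?S = "ennreal lam1 * w lam1 x (T x) + ennreal lam2 * w lam2 y (T y)"
  have lam_split: "lam = lam1 + k * lam + lam2"
    using \<open>lam1 + lam2 = (1 - k) * lam\<close> by (simp add: algebra_simps)
  have "ennreal lam * w lam x y
          \<le> ennreal lam1 * w lam1 x (T x) + ennreal (k * lam) * w (k * lam) (T x) (T y)
            + ennreal lam2 * w lam2 (T y) y"
    using convex_modular_weighted_path[OF \<open>convex_modular w\<close> \<open>0 < lam1\<close> _ \<open>0 < lam2\<close>]
      \<open>0 < k\<close> \<open>0 < lam\<close> lam_split by (metis mult_pos_pos)
  also have "\<dots> \<le> ennreal lam1 * w lam1 x (T x) + ennreal (k * lam) * w lam x y
                  + ennreal lam2 * w lam2 y (T y)"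
  proof -
    have "w (k * lam) (T x) (T y) \<le> w lam x y"
      using assms(7) \<open>0 < lam\<close> \<open>lam < lam0\<close> x y by simp
    moreover have "w lam2 (T y) y = w lam2 y (T y)"
      using metric_modular_sym[OF \<open>metric_modular w\<close> \<open>0 < lam2\<close>] .
    ultimately show ?thesis by (simp add: add_mono mult_left_mono)
  qed
  also have "\<dots> = ?S + ennreal (k * lam) * w lam x y"
    by (simp add: ac_simps)
  finally have "ennreal lam * w lam x y \<le> ?S + ennreal (k * lam) * w lam x y" .
  then have "w lam x y \<le> ?S / ennreal (lam - k * lam)"
    using finite \<open>0 < k\<close> \<open>k < 1\<close> \<open>0 < lam\<close> by (intro ennreal_absorb_le_divide) auto
  then show "w lam x y \<le> ?S / ennreal (lam * (1 - k))"
    by (simp add: algebra_simps)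
qed

end
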